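(* Let $n$ be a positive integer and let $\theta=\lambda/\mu$ be a skew Young diagram such that every column of $\theta$ contains at most $n$ boxes. Then the number $|\mathrm{SVT}(\theta,n)|$ of set-valued tableaux of shape $\theta$ with entries in $[n]=\{1,\dots,n\}$ is odd.
   Context: A partition $\lambda=(\lambda_1\ge\lambda_2\ge\cdots\ge 0)$ is identified with its Young diagram $\{(i,j)\in\mathbb{Z}_{>0}^2 : j\le\lambda_i\}$ (row index $i$ increasing downward, column index $j$ increasing to the right). For partitions $\mu\subseteq\lambda$, the skew Young diagram $\theta=\lambda/\mu$ is the set-theoretic difference $\lambda\setminus\mu$, and $|\theta|$ is its number of boxes. A set-valued tableau of shape $\theta$ with entries in $[n]$ is an assignment of a non-empty subset $T_{i,j}\subseteq[n]$ to each box $(i,j)\in\theta$ such that $\max T_{i,j}\le\min T_{i,j+1}$ whenever $(i,j),(i,j+1)\in\theta$, and $\max T_{i,j}<\min T_{i+1,j}$ whenever $(i,j),(i+1,j)\in\theta$. $\mathrm{SVT}(\theta,n)$ denotes the set of all such tableaux. *)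

theory Defs
  imports Main
begin

text \<open>We represent it as a
  function nat => nat, with the (unused) value at index 0 normalised to 0.\<close>
definition is_partition :: "(nat \<Rightarrow> nat) \<Rightarrow> bool" where
  "is_partition lam \<longleftrightarrow> lam 0 = 0 \<and> (\<forall>i j. 1 \<le> i \<and> i \<le> j \<longrightarrow> lam j \<le> lam i)
     \<and> finite {i. lam i \<noteq> 0}"

definition young :: "(nat \<Rightarrow> nat) \<Rightarrow> (nat \<times> nat) set" where
  "young lam = {(i, j). 1 \<le> i \<and> 1 \<le> j \<and> j \<le> lam i}"

definition skew :: "(nat \<Rightarrow> nat) \<Rightarrow> (nat \<Rightarrow> nat) \<Rightarrow> (nat \<times> nat) set" where
  "skew lam mu = young lam - young mu"

text \<open>A tableau is a map
  from boxes to sets; boxes outside theta are assigned the empty set (so that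
  SVT is a set of genuinely distinct assignments on theta).\<close>
definition SVT :: "(nat \<times> nat) set \<Rightarrow> nat \<Rightarrow> (nat \<times> nat \<Rightarrow> nat set) set" where
  "SVT theta n = {T.
     (\<forall>b. b \<notin> theta \<longrightarrow> T b = {}) \<and>
     (\<forall>b\<in>theta. T b \<noteq> {} \<and> T b \<subseteq> {1..n}) \<and>
     (\<forall>i j. (i, j) \<in> theta \<and> (i, j + 1) \<in> theta \<longrightarrow> Max (T (i, j)) \<le> Min (T (i, j + 1))) \<and>
     (\<forall>i j. (i, j) \<in> theta \<and> (i + 1, j) \<in> theta \<longrightarrow> Max (T (i, j)) < Min (T (i + 1, j)))}"

end

theory Submission
  imports Defs "HOL-Library.Disjoint_Sets" "HOL-Library.Z2"
begin

(* Induction on n. Call a box of \<theta> a column bottom if the box below it is not in \<theta>.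
   Toggling the letter n in the entry of a column bottom b keeps a tableau valid as long as
   T b \<noteq> {n} and the right neighbour of b is absent or has entry {n}; since toggling does
   not change which boxes qualify, toggling at a chosen qualifying box is a fixed-point-free
   involution. If no box qualifies, every column bottom has entry {n}: otherwise the rightmost
   offending bottom would qualify, because in a skew shape the right neighbour of a column
   bottom is again a column bottom. Deleting the column bottoms maps these tableaux bijectively
   onto SVT(\<theta>', n - 1), where \<theta>' has at most n - 1 boxes per column, so
   |SVT(\<theta>, n)| and |SVT(\<theta>', n - 1)| have the same parity. *)

lemma even_card_involution:
  assumes "\<And>x. x \<in> X \<Longrightarrow> h x \<in> X" "\<And>x. x \<in> X \<Longrightarrow> h (h x) = x"
    and "\<And>x. x \<in> X \<Longrightarrow> h x \<noteq> x"
  shows "even (card X)"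
proof -
  have "(\<Sum>x\<in>X. 1 :: bit) = 0"
    using sum_involution_eq_0[of X "\<lambda>_. 1 :: bit" h] assms by simp
  then have "even (of_nat (card X) :: bit)"
    by simp
  then show ?thesis
    by (simp only: even_of_nat_iff)
qed

(* The only property of skew shapes the argument needs. *)
definition skew_closed :: "(nat \<times> nat) set \<Rightarrow> bool" where
  "skew_closed th \<longleftrightarrow> (\<forall>i j. (i, j) \<in> th \<and> (i + 1, j + 1) \<in> th \<longrightarrow> (i + 1, j) \<in> th)"

definition column_bottoms :: "(nat \<times> nat) set \<Rightarrow> (nat \<times> nat) set" where
  "column_bottoms th = {(i, j). (i, j) \<in> th \<and> (i + 1, j) \<notin> th}"

definition togglable :: "(nat \<times> nat) set \<Rightarrow> nat \<Rightarrow> (nat \<times> nat \<Rightarrow> nat set) \<Rightarrow> (nat \<times> nat) set" where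
  "togglable th N T = {(i, j). (i, j) \<in> column_bottoms th \<and> T (i, j) \<noteq> {N}
     \<and> ((i, j + 1) \<notin> th \<or> T (i, j + 1) = {N})}"

definition toggle :: "nat \<Rightarrow> (nat \<times> nat \<Rightarrow> nat set) \<Rightarrow> nat \<times> nat \<Rightarrow> nat \<times> nat \<Rightarrow> nat set" where
  "toggle N T b = T(b := (if N \<in> T b then T b - {N} else insert N (T b)))"

lemma skew_closed_Diff_column_bottoms: "skew_closed th \<Longrightarrow> skew_closed (th - column_bottoms th)"
  unfolding skew_closed_def column_bottoms_def by auto

lemma finite_SVT: "finite th \<Longrightarrow> finite (SVT th n)"
proof -
  assume "finite th"
  then have "finite {T. \<forall>b. (b \<in> th \<longrightarrow> T b \<in> Pow {1..n}) \<and> (b \<notin> th \<longrightarrow> T b = {})}"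
    by (intro finite_set_of_finite_funs) auto
  moreover have "SVT th n \<subseteq> {T. \<forall>b. (b \<in> th \<longrightarrow> T b \<in> Pow {1..n}) \<and> (b \<notin> th \<longrightarrow> T b = {})}"
    unfolding SVT_def by auto
  ultimately show ?thesis
    by (rule finite_subset[rotated])
qed

lemma SVT_outside: "T \<in> SVT th N \<Longrightarrow> b \<notin> th \<Longrightarrow> T b = {}"
  unfolding SVT_def by blast

lemma SVT_entry_nonempty: "T \<in> SVT th N \<Longrightarrow> b \<in> th \<Longrightarrow> T b \<noteq> {}"
  unfolding SVT_def by blast

lemma SVT_entry_subset: "T \<in> SVT th N \<Longrightarrow> b \<in> th \<Longrightarrow> T b \<subseteq> {1..N}"
  unfolding SVT_def by blast

lemma SVT_row:
  "T \<in> SVT th N \<Longrightarrow> (i, j) \<in> th \<Longrightarrow> (i, j + 1) \<in> th \<Longrightarrow> Max (T (i, j)) \<le> Min (T (i, j + 1))"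
  unfolding SVT_def by blast

lemma SVT_column:
  "T \<in> SVT th N \<Longrightarrow> (i, j) \<in> th \<Longrightarrow> (i + 1, j) \<in> th \<Longrightarrow> Max (T (i, j)) < Min (T (i + 1, j))"
  unfolding SVT_def by blast

lemma SVT_update_column_bottom:
  assumes T: "T \<in> SVT th N" and b: "(i, j) \<in> column_bottoms th"
    and X: "X \<noteq> {}" "X \<subseteq> {1..N}" "Min X = Min (T (i, j))"
    and right: "(i, j + 1) \<in> th \<Longrightarrow> Max X \<le> Min (T (i, j + 1))"
  shows "T((i, j) := X) \<in> SVT th N"
  using assms unfolding SVT_def column_bottoms_def by auto

lemma Min_insert_upper_bound:
  fixes x :: "'a :: linorder"
  assumes "finite Y" "Y \<noteq> {}" "\<forall>y\<in>Y. y \<le> x"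
  shows "Min (insert x Y) = Min Y"
  using assms by (simp add: Min_insert min_absorb2)

lemma toggle_toggle: "toggle N (toggle N T b) b = T"
  unfolding toggle_def by (auto simp: insert_absorb)

lemma toggle_neq: "toggle N T b \<noteq> T"
proof
  assume "toggle N T b = T"
  then have "(if N \<in> T b then T b - {N} else insert N (T b)) = T b"
    unfolding toggle_def by (metis fun_upd_same)
  then show False
    by (auto split: if_splits)
qed

lemma togglable_toggle:
  assumes "T b \<noteq> {}" "T b \<noteq> {N}"
  shows "togglable th N (toggle N T b) = togglable th N T"
proof -
  have "toggle N T b c = {N} \<longleftrightarrow> T c = {N}" for c
    using assms unfolding toggle_def by auto
  then show ?thesis
    unfolding togglable_def by simp
qed

lemma toggle_in_SVT:
  assumes T: "T \<in> SVT th N" and b: "(i, j) \<in> togglable th N T"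
  shows "toggle N T (i, j) \<in> SVT th N"
proof -
  define X where "X = T (i, j)"
  have bottom: "(i, j) \<in> column_bottoms th" and "X \<noteq> {N}"
    and right: "(i, j + 1) \<in> th \<Longrightarrow> T (i, j + 1) = {N}"
    using b unfolding togglable_def X_def by auto
  have "(i, j) \<in> th"
    using bottom unfolding column_bottoms_def by simp
  then have "X \<noteq> {}" and X_range: "X \<subseteq> {1..N}"
    unfolding X_def using SVT_entry_nonempty[OF T] SVT_entry_subset[OF T] by auto
  have "finite X"
    using finite_subset[OF X_range] by simp
  show ?thesis
  proof (cases "N \<in> X")
    case True
    have "Min X = Min (insert N (X - {N}))"
      using True by (simp add: insert_absorb)
    also have "\<dots> = Min (X - {N})"
      using \<open>finite X\<close> \<open>X \<noteq> {}\<close> \<open>X \<noteq> {N}\<close> X_range by (intro Min_insert_upper_bound) auto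
    finally have "Min (X - {N}) = Min X" ..
    moreover have "Max (X - {N}) \<le> Min (T (i, j + 1))" if "(i, j + 1) \<in> th"
    proof -
      have "Max (X - {N}) \<le> Max X"
        using \<open>finite X\<close> \<open>X \<noteq> {N}\<close> True by (intro Max_mono) auto
      also have "\<dots> \<le> Min (T (i, j + 1))"
        unfolding X_def using SVT_row[OF T \<open>(i, j) \<in> th\<close> that] .
      finally show ?thesis .
    qed
    ultimately show ?thesis
      using SVT_update_column_bottom[OF T bottom, of "X - {N}"] True \<open>X \<noteq> {N}\<close> X_range
      unfolding toggle_def X_def by auto
  next
    case False
    have "Min (insert N X) = Min X"
      using \<open>finite X\<close> \<open>X \<noteq> {}\<close> X_range by (intro Min_insert_upper_bound) auto
    moreover have "Max (insert N X) = N"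
      using \<open>finite X\<close> X_range by (intro Max_insert2) auto
    ultimately show ?thesis
      using SVT_update_column_bottom[OF T bottom, of "insert N X"] False right X_range \<open>X \<noteq> {}\<close>
      unfolding toggle_def X_def by auto
  qed
qed

lemma column_bottoms_right:
  assumes "skew_closed th" "(i, j) \<in> column_bottoms th" "(i, j + 1) \<in> th"
  shows "(i, j + 1) \<in> column_bottoms th"
  using assms unfolding skew_closed_def column_bottoms_def by blast

lemma togglable_empty_iff:
  assumes "finite th" "skew_closed th"
  shows "togglable th N T = {} \<longleftrightarrow> (\<forall>b\<in>column_bottoms th. T b = {N})"
proof
  assume "\<forall>b\<in>column_bottoms th. T b = {N}"
  then show "togglable th N T = {}"
    unfolding togglable_def by auto
next
  assume no_togglable: "togglable th N T = {}"
  show "\<forall>b\<in>column_bottoms th. T b = {N}"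
  proof (rule ccontr)
    define E where "E = {b \<in> column_bottoms th. T b \<noteq> {N}}"
    assume "\<not> (\<forall>b\<in>column_bottoms th. T b = {N})"
    then have "E \<noteq> {}"
      unfolding E_def by blast
    moreover have "finite E"
      using assms(1) by (rule finite_subset[rotated]) (auto simp: E_def column_bottoms_def)
    ultimately have "Max (snd ` E) \<in> snd ` E"
      by (intro Max_in) auto
    then obtain b where "b \<in> E" and "snd b = Max (snd ` E)"
      by (metis imageE)
    define p q where "p = fst b" and "q = snd b"
    have pq: "(p, q) \<in> column_bottoms th" "T (p, q) \<noteq> {N}"
      using \<open>b \<in> E\<close> unfolding E_def p_def q_def by auto
    then have "(p, q + 1) \<in> th" "T (p, q + 1) \<noteq> {N}"
      using no_togglable unfolding togglable_def by auto
    then have "(p, q + 1) \<in> E"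
      using column_bottoms_right[OF assms(2) pq(1)] unfolding E_def by auto
    then have "q + 1 \<le> Max (snd ` E)"
      using \<open>finite E\<close> by (metis Max_ge finite_imageI image_eqI snd_conv)
    then have "q + 1 \<le> q"
      unfolding q_def by (simp add: \<open>snd b = Max (snd ` E)\<close>)
    then show False
      by simp
  qed
qed

lemma SVT_restrict_Diff_column_bottoms:
  assumes T: "T \<in> SVT th (Suc m)"
  shows "(\<lambda>b. if b \<in> column_bottoms th then {} else T b) \<in> SVT (th - column_bottoms th) m"
proof -
  have "T (i, j) \<subseteq> {1..m}" if "(i, j) \<in> th - column_bottoms th" for i j
  proof
    fix x assume x: "x \<in> T (i, j)"
    have "(i, j) \<in> th" "(i + 1, j) \<in> th"
      using that unfolding column_bottoms_def by auto
    have below: "T (i + 1, j) \<noteq> {}" "T (i + 1, j) \<subseteq> {1..Suc m}"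
      using SVT_entry_nonempty[OF T] SVT_entry_subset[OF T] \<open>(i + 1, j) \<in> th\<close> by auto
    have "finite (T (i, j))"
      using finite_subset[OF SVT_entry_subset[OF T \<open>(i, j) \<in> th\<close>]] by simp
    then have "x \<le> Max (T (i, j))"
      using x by simp
    also have "\<dots> < Min (T (i + 1, j))"
      using SVT_column[OF T \<open>(i, j) \<in> th\<close> \<open>(i + 1, j) \<in> th\<close>] .
    also have "\<dots> \<le> Suc m"
      using below finite_subset[OF below(2)] Min_in by fastforce
    finally show "x \<in> {1..m}"
      using x SVT_entry_subset[OF T \<open>(i, j) \<in> th\<close>] by auto
  qed
  then show ?thesis
    using T unfolding SVT_def by auto
qed

lemma SVT_extend_column_bottoms:
  assumes "skew_closed th" and U: "U \<in> SVT (th - column_bottoms th) m"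
  shows "(\<lambda>b. if b \<in> column_bottoms th then {Suc m} else U b) \<in> SVT th (Suc m)"
    (is "?V \<in> _")
proof -
  let ?D = "column_bottoms th"
  have U_le: "Max (U b) \<le> m" if "b \<in> th - ?D" for b
    using SVT_entry_nonempty[OF U that] SVT_entry_subset[OF U that]
      finite_subset[OF SVT_entry_subset[OF U that]] Max_in by fastforce
  have "?D \<subseteq> th"
    unfolding column_bottoms_def by auto
  then have outside: "?V b = {}" if "b \<notin> th" for b
    using SVT_outside[OF U] that by auto
  have entries: "?V b \<noteq> {} \<and> ?V b \<subseteq> {1..Suc m}" if "b \<in> th" for b
  proof (cases "b \<in> ?D")
    case False
    then have "b \<in> th - ?D"
      using that by simp
    then have "U b \<noteq> {}" "U b \<subseteq> {1..m}"
      using SVT_entry_nonempty[OF U] SVT_entry_subset[OF U] by blast+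
    then show ?thesis
      using False by auto
  qed simp
  have row: "Max (?V (i, j)) \<le> Min (?V (i, j + 1))"
    if "(i, j) \<in> th" "(i, j + 1) \<in> th" for i j
  proof (cases "(i, j) \<in> ?D")
    case True
    then show ?thesis
      using column_bottoms_right[OF assms(1) True that(2)] by simp
  next
    case False
    then show ?thesis
      using U_le[of "(i, j)"] SVT_row[OF U, of i j] that by auto
  qed
  have column: "Max (?V (i, j)) < Min (?V (i + 1, j))"
    if "(i, j) \<in> th" "(i + 1, j) \<in> th" for i j
  proof -
    have "(i, j) \<notin> ?D"
      using that(2) unfolding column_bottoms_def by simp
    then show ?thesis
      using U_le[of "(i, j)"] SVT_column[OF U, of i j] that by (auto simp: le_imp_less_Suc)
  qed
  show ?thesis
    unfolding SVT_def using outside entries row column by blast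
qed

lemma bij_betw_SVT_Diff_column_bottoms:
  assumes "skew_closed th"
  shows "bij_betw (\<lambda>T b. if b \<in> column_bottoms th then {} else T b)
    {T \<in> SVT th (Suc m). \<forall>b\<in>column_bottoms th. T b = {Suc m}}
    (SVT (th - column_bottoms th) m)"
proof (rule bij_betw_byWitness[where f' = "\<lambda>U b. if b \<in> column_bottoms th then {Suc m} else U b"])
  show "\<forall>T\<in>{T \<in> SVT th (Suc m). \<forall>b\<in>column_bottoms th. T b = {Suc m}}.
      (\<lambda>b. if b \<in> column_bottoms th then {Suc m}
        else if b \<in> column_bottoms th then {} else T b) = T"
    by (auto simp: fun_eq_iff)
  show "\<forall>U\<in>SVT (th - column_bottoms th) m.
      (\<lambda>b. if b \<in> column_bottoms th then {}
        else if b \<in> column_bottoms th then {Suc m} else U b) = U"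
  proof (intro ballI ext)
    fix U b assume "U \<in> SVT (th - column_bottoms th) m"
    then show "(if b \<in> column_bottoms th then {}
        else if b \<in> column_bottoms th then {Suc m} else U b) = U b"
      using SVT_outside[of U _ m b] by auto
  qed
  show "(\<lambda>T b. if b \<in> column_bottoms th then {} else T b) `
      {T \<in> SVT th (Suc m). \<forall>b\<in>column_bottoms th. T b = {Suc m}} \<subseteq> SVT (th - column_bottoms th) m"
    using SVT_restrict_Diff_column_bottoms by blast
  show "(\<lambda>U b. if b \<in> column_bottoms th then {Suc m} else U b) ` SVT (th - column_bottoms th) m
      \<subseteq> {T \<in> SVT th (Suc m). \<forall>b\<in>column_bottoms th. T b = {Suc m}}"
    using SVT_extend_column_bottoms[OF assms] by auto
qed

lemma finite_column: "finite th \<Longrightarrow> finite {i. (i, j) \<in> th}"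
  by (rule finite_subset[of _ "fst ` th"]) force+

lemma card_column_Diff_column_bottoms:
  assumes "finite th" "card {i. (i, j) \<in> th} \<le> Suc m"
  shows "card {i. (i, j) \<in> th - column_bottoms th} \<le> m"
proof (cases "{i. (i, j) \<in> th} = {}")
  case True
  then show ?thesis
    by simp
next
  case False
  define C where "C = {i. (i, j) \<in> th}"
  have "finite C"
    unfolding C_def using assms(1) by (rule finite_column)
  define i where "i = Max C"
  have "i \<in> C"
    using \<open>finite C\<close> False unfolding i_def C_def by (intro Max_in) auto
  moreover have "i + 1 \<notin> C"
    using Max_ge[OF \<open>finite C\<close>, of "i + 1"] unfolding i_def by auto
  ultimately have "(i, j) \<in> column_bottoms th"
    unfolding C_def column_bottoms_def by simp
  then have "{i. (i, j) \<in> th - column_bottoms th} \<subseteq> C - {i}"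
    unfolding C_def by auto
  then have "card {i. (i, j) \<in> th - column_bottoms th} \<le> card (C - {i})"
    using \<open>finite C\<close> by (intro card_mono) auto
  also have "\<dots> = card C - 1"
    using \<open>i \<in> C\<close> \<open>finite C\<close> by simp
  finally show ?thesis
    using assms(2) unfolding C_def by simp
qed

lemma even_card_SVT_togglable: "even (card {T \<in> SVT th N. togglable th N T \<noteq> {}})"
proof -
  (* flip chooses the same box again on flip T, as toggling leaves togglable unchanged. *)
  define flip where "flip T = toggle N T (SOME b. b \<in> togglable th N T)" for T
  show ?thesis
  proof (rule even_card_involution[of _ flip])
    fix T assume "T \<in> {T \<in> SVT th N. togglable th N T \<noteq> {}}"
    then have T: "T \<in> SVT th N" and "togglable th N T \<noteq> {}"
      by simp_all
    define b where "b = (SOME b. b \<in> togglable th N T)"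
    have b: "b \<in> togglable th N T"
      unfolding b_def using \<open>togglable th N T \<noteq> {}\<close> by (simp add: some_in_eq)
    obtain i j where ij: "b = (i, j)"
      by fastforce
    have flip_T: "flip T = toggle N T b"
      unfolding flip_def b_def ..
    have "b \<in> th" "T b \<noteq> {N}"
      using b unfolding togglable_def column_bottoms_def ij by auto
    then have same_togglable: "togglable th N (flip T) = togglable th N T"
      unfolding flip_T using togglable_toggle SVT_entry_nonempty[OF T] by simp
    have "flip T \<in> SVT th N"
      unfolding flip_T ij using toggle_in_SVT[OF T] b ij by simp
    then show "flip T \<in> {T \<in> SVT th N. togglable th N T \<noteq> {}}"
      using same_togglable \<open>togglable th N T \<noteq> {}\<close> by simp
    have "flip (flip T) = toggle N (flip T) b"
      unfolding flip_def[of "flip T"] same_togglable b_def ..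
    then show "flip (flip T) = T"
      unfolding flip_T by (simp add: toggle_toggle)
    show "flip T \<noteq> T"
      unfolding flip_T by (rule toggle_neq)
  qed
qed

lemma odd_card_SVT:
  assumes "finite th" "skew_closed th" "\<forall>j. card {i. (i, j) \<in> th} \<le> n"
  shows "odd (card (SVT th n))"
  using assms
proof (induction n arbitrary: th)
  case 0
  have "th = {}"
  proof (rule ccontr)
    assume "th \<noteq> {}"
    then obtain i j where "(i, j) \<in> th"
      by auto
    moreover have "card {i. (i, j) \<in> th} = 0"
      using "0.prems"(3) by simp
    ultimately show False
      using finite_column[OF \<open>finite th\<close>, of j] by simp
  qed
  moreover have "SVT {} 0 = {\<lambda>_. {}}"
    unfolding SVT_def by auto
  ultimately show ?case
    by simp
next
  case (Suc m)
  let ?D = "column_bottoms th"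
  define F where "F = {T \<in> SVT th (Suc m). togglable th (Suc m) T = {}}"
  define G where "G = {T \<in> SVT th (Suc m). togglable th (Suc m) T \<noteq> {}}"
  have "F = {T \<in> SVT th (Suc m). \<forall>b\<in>?D. T b = {Suc m}}"
    unfolding F_def by (simp add: togglable_empty_iff[OF Suc.prems(1,2)])
  then have "card F = card (SVT (th - ?D) m)"
    using bij_betw_same_card[OF bij_betw_SVT_Diff_column_bottoms[OF Suc.prems(2)]] by simp
  moreover have "odd (card (SVT (th - ?D) m))"
  proof (rule Suc.IH)
    show "finite (th - ?D)"
      using Suc.prems(1) by simp
    show "skew_closed (th - ?D)"
      using Suc.prems(2) by (rule skew_closed_Diff_column_bottoms)
    show "\<forall>j. card {i. (i, j) \<in> th - ?D} \<le> m"
      using Suc.prems(1,3) card_column_Diff_column_bottoms by simp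
  qed
  moreover have "even (card G)"
    unfolding G_def by (rule even_card_SVT_togglable)
  moreover have "card (SVT th (Suc m)) = card F + card G"
  proof -
    have "SVT th (Suc m) = F \<union> G" "F \<inter> G = {}"
      unfolding F_def G_def by blast+
    moreover have "finite F" "finite G"
      unfolding F_def G_def using finite_SVT[OF Suc.prems(1)] by simp_all
    ultimately show ?thesis
      by (simp add: card_Un_disjoint)
  qed
  ultimately show ?case
    by simp
qed

lemma finite_skew:
  assumes "is_partition lam"
  shows "finite (skew lam mu)"
proof -
  have "young lam \<subseteq> {i. lam i \<noteq> 0} \<times> {..lam 1}"
  proof
    fix b assume "b \<in> young lam"
    then obtain i j where b: "b = (i, j)" "1 \<le> i" "1 \<le> j" "j \<le> lam i"
      unfolding young_def by auto
    moreover have "lam i \<le> lam 1"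
      using assms b(2) unfolding is_partition_def by auto
    ultimately show "b \<in> {i. lam i \<noteq> 0} \<times> {..lam 1}"
      by auto
  qed
  moreover have "finite {i. lam i \<noteq> 0}"
    using assms unfolding is_partition_def by simp
  ultimately have "finite (young lam)"
    using finite_subset by blast
  then show ?thesis
    unfolding skew_def by simp
qed

lemma skew_closed_skew:
  assumes "is_partition mu"
  shows "skew_closed (skew lam mu)"
  unfolding skew_closed_def
proof (intro allI impI)
  fix i j assume ij: "(i, j) \<in> skew lam mu \<and> (i + 1, j + 1) \<in> skew lam mu"
  then have "1 \<le> i"
    unfolding skew_def young_def by simp
  then have "mu (i + 1) \<le> mu i"
    using assms unfolding is_partition_def by simp
  then show "(i + 1, j) \<in> skew lam mu"
    using ij unfolding skew_def young_def by auto
qed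

theorem theorem3p1:
  fixes n :: nat and lam mu :: "nat \<Rightarrow> nat"
  assumes "n \<ge> 1"
    and "is_partition lam" and "is_partition mu"
    and "young mu \<subseteq> young lam"
    and "\<forall>j. card {i. (i, j) \<in> skew lam mu} \<le> n"
  shows "odd (card (SVT (skew lam mu) n))"
  using odd_card_SVT[OF finite_skew[OF assms(2)] skew_closed_skew[OF assms(3)] assms(5)] .

end
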